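(* Let $n=2m+1\ge 3$ be odd, let $\theta$ be a generator of $\mathrm{Gal}(\mathbb{F}_{2^n}/\mathbb{F}_2)$, and let $G=A(n,\theta)$. Let $C\subseteq G$ be a union of conjugacy classes of elements of order $4$, obtained by choosing, for each pair $\{K,K^{(-1)}\}$ consisting of a conjugacy class $K$ of elements of order $4$ and its inverse class $K^{(-1)}=\{k^{-1}:k\in K\}$, exactly one of $K$ and $K^{(-1)}$. (In $G$ no class of elements of order $4$ equals its inverse class, so $C\cap C^{(-1)}=\emptyset$ and $C$ consists of exactly half of the conjugacy classes of elements of order 4.) Then the continuous-time quantum walk on the oriented Cayley graph $\mathrm{Cay}(G,C)$ has uniform mixing at time $\tau=\pi/2^{n+1}$, i.e. all entries of $e^{\tau S}$ have the same absolute value, where $S$ is the skew adjacency matrix of $\mathrm{Cay}(G,C)$.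
   Context: Let $\mathbb{F}_{2^n}$ be the field with $2^n$ elements and write $a^\theta$ for the image of $a$ under the field automorphism $\theta$. $A(n,\theta)$ is the group (under matrix multiplication) of $3\times 3$ matrices $\begin{bmatrix}1&a&b\\0&1&a^\theta\\0&0&1\end{bmatrix}$ with $a,b\in\mathbb{F}_{2^n}$; writing $(a,b)$ for this matrix, $(a,b)(c,d)=(a+c,\,b+d+ac^\theta)$. For a finite group $G$ and a subset $C\subseteq G$ with $1\notin C$, the Cayley digraph $\mathrm{Cay}(G,C)$ has vertex set $G$ and an arc from $g$ to $cg$ for every $g\in G$, $c\in C$; it is oriented when $C\cap C^{(-1)}=\emptyset$, where $C^{(-1)}=\{c^{-1}:c\in C\}$. For an oriented graph, the skew adjacency matrix $S$ is indexed by vertices, with $(u,v)$ entry $1$ if $(u,v)$ is an arc, $-1$ if $(v,u)$ is an arc, and $0$ otherwise. The quantum walk has transition matrices $U(t)=e^{tS}$, and it has uniform mixing at time $\tau$ if all entries of $U(\tau)$ have the same absolute value. *)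

theory Defs
  imports Complex_Main
begin

definition Amul :: "('a::field \<Rightarrow> 'a) \<Rightarrow> 'a \<times> 'a \<Rightarrow> 'a \<times> 'a \<Rightarrow> 'a \<times> 'a" where
  "Amul \<theta> x y = (fst x + fst y, snd x + snd y + fst x * \<theta> (fst y))"

definition Aone :: "'a::field \<times> 'a" where
  "Aone = (0, 0)"

definition Ainv :: "('a::field \<Rightarrow> 'a) \<Rightarrow> 'a \<times> 'a \<Rightarrow> 'a \<times> 'a" where
  "Ainv \<theta> x = (- fst x, fst x * \<theta> (fst x) - snd x)"

fun Apow :: "('a::field \<Rightarrow> 'a) \<Rightarrow> 'a \<times> 'a \<Rightarrow> nat \<Rightarrow> 'a \<times> 'a" where
  "Apow \<theta> g 0 = Aone"
| "Apow \<theta> g (Suc k) = Amul \<theta> (Apow \<theta> g k) g"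

definition Aord :: "('a::field \<Rightarrow> 'a) \<Rightarrow> 'a \<times> 'a \<Rightarrow> nat" where
  "Aord \<theta> g = (LEAST k. 0 < k \<and> Apow \<theta> g k = Aone)"

definition Aconjcl :: "('a::field \<Rightarrow> 'a) \<Rightarrow> 'a \<times> 'a \<Rightarrow> ('a \<times> 'a) set" where
  "Aconjcl \<theta> g = {Amul \<theta> (Amul \<theta> x g) (Ainv \<theta> x) | x. True}"

definition Aclasses4 :: "('a::field \<Rightarrow> 'a) \<Rightarrow> ('a \<times> 'a) set set" where
  "Aclasses4 \<theta> = {Aconjcl \<theta> g | g. Aord \<theta> g = 4}"

definition skew_adj :: "('g \<Rightarrow> 'g \<Rightarrow> 'g) \<Rightarrow> 'g set \<Rightarrow> 'g \<Rightarrow> 'g \<Rightarrow> real" where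
  "skew_adj mul C u v =
     (if \<exists>c\<in>C. v = mul c u then 1 else if \<exists>c\<in>C. u = mul c v then -1 else 0)"

fun mat_pow :: "('i::finite \<Rightarrow> 'i \<Rightarrow> real) \<Rightarrow> nat \<Rightarrow> 'i \<Rightarrow> 'i \<Rightarrow> real" where
  "mat_pow M 0 = (\<lambda>u v. if u = v then 1 else 0)"
| "mat_pow M (Suc k) = (\<lambda>u v. \<Sum>w\<in>UNIV. mat_pow M k u w * M w v)"

definition mat_exp :: "('i::finite \<Rightarrow> 'i \<Rightarrow> real) \<Rightarrow> 'i \<Rightarrow> 'i \<Rightarrow> real" where
  "mat_exp M = (\<lambda>u v. \<Sum>k. mat_pow M k u v / fact k)"

definition uniform_mixing :: "('i::finite \<Rightarrow> 'i \<Rightarrow> real) \<Rightarrow> bool" where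
  "uniform_mixing U \<longleftrightarrow> (\<exists>c. \<forall>u v. \<bar>U u v\<bar> = c)"

end

theory Submission
  imports
    Defs
    "HOL-Algebra.Multiplicative_Group"
    "HOL-Algebra.Algebraic_Closure_Type"
begin

text \<open>
  Let \<open>s\<close> be the function on \<open>G\<close> that is \<open>1\<close> on \<open>C\<close>, \<open>-1\<close> on \<open>C\<^sup>-\<^sup>1\<close> and \<open>0\<close> on the centre
  \<open>{(0, b)}\<close>; then \<open>S u v = s (v u\<^sup>-\<^sup>1)\<close>. The conjugacy class of \<open>(a, b)\<close>, \<open>a \<noteq> 0\<close>, is
  \<open>(a, b + N a * T)\<close> with \<open>N a = a \<theta>(a)\<close> and \<open>T = {\<theta> s + s}\<close>, a hyperplane of trace-zero
  elements not containing \<open>1\<close> because \<open>n\<close> is odd, while inversion maps \<open>(a, b)\<close> to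
  \<open>(a, b + N a)\<close>. Hence \<open>s (a, b + N a * y) = s (a, b) \<chi>(y)\<close> for the additive character \<open>\<chi>\<close>
  with kernel \<open>T\<close>. Character sums, together with the injectivity of \<open>N\<close> on nonzero elements
  (again since \<open>n\<close> is odd), give \<open>S\<^sup>2 = 2\<^sup>n Z - 4\<^sup>n I\<close> and \<open>Z S = 0\<close>, where \<open>Z u v = 1\<close> iff \<open>u\<close>
  and \<open>v\<close> lie in the same coset of the centre. So \<open>S\<^sup>3 = -4\<^sup>n S\<close> and
  \<open>e\<^sup>\<tau>\<^sup>S = I + sin(2\<^sup>n\<tau>)/2\<^sup>n S + (1 - cos(2\<^sup>n\<tau>))/4\<^sup>n S\<^sup>2\<close>, which at \<open>\<tau> = \<pi>/2\<^sup>n\<^sup>+\<^sup>1\<close> is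
  \<open>(S + Z)/2\<^sup>n\<close>, a matrix with all entries \<open>\<plusminus>2\<^sup>-\<^sup>n\<close>.

  That \<open>T\<close> has index 2 rests on the fact that \<open>\<theta>\<close> fixes only \<open>0\<close> and \<open>1\<close>; this follows because
  squaring is a power of \<open>\<theta>\<close>, as the \<open>n\<close> conjugates of a generator of the multiplicative group
  and its square are roots of one \<open>{0,1}\<close>-polynomial of degree at most \<open>n\<close>.
\<close>

section \<open>Matrix exponentials of matrices with \<open>M\<^sup>3 = -c\<^sup>2 M\<close>\<close>

definition mat_id :: "'i \<Rightarrow> 'i \<Rightarrow> real" where
  "mat_id u v = (if u = v then 1 else 0)"

definition mat_mult ::
  "('i::finite \<Rightarrow> 'i \<Rightarrow> real) \<Rightarrow> ('i \<Rightarrow> 'i \<Rightarrow> real) \<Rightarrow> 'i \<Rightarrow> 'i \<Rightarrow> real" where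
  "mat_mult A B u v = (\<Sum>w\<in>UNIV. A u w * B w v)"

lemma mat_pow_0_eq: "mat_pow M 0 = mat_id"
  by (simp add: fun_eq_iff mat_id_def)

lemma mat_pow_Suc_eq: "mat_pow M (Suc k) = mat_mult (mat_pow M k) M"
  by (simp add: fun_eq_iff mat_mult_def)

declare mat_pow.simps [simp del]

lemma mat_mult_id_left [simp]: "mat_mult mat_id A = A"
proof (intro ext)
  fix u v
  have "mat_mult mat_id A u v = (\<Sum>w\<in>UNIV. if u = w then A w v else 0)"
    unfolding mat_mult_def mat_id_def by (intro sum.cong) auto
  then show "mat_mult mat_id A u v = A u v" by simp
qed

lemma mat_mult_scale_left: "mat_mult (\<lambda>u v. a * A u v) B = (\<lambda>u v. a * mat_mult A B u v)"
  by (simp add: fun_eq_iff mat_mult_def sum_distrib_left mult.assoc)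

lemma mat_mult_scale_right: "mat_mult A (\<lambda>u v. b * B u v) = (\<lambda>u v. b * mat_mult A B u v)"
  by (simp add: fun_eq_iff mat_mult_def sum_distrib_left mult_ac)

lemma mat_mult_diff_left:
  "mat_mult (\<lambda>u v. A u v - B u v) D = (\<lambda>u v. mat_mult A D u v - mat_mult B D u v)"
  by (simp add: fun_eq_iff mat_mult_def left_diff_distrib sum_subtractf)

lemma mat_pow_odd_even_of_cube:
  assumes cube: "mat_mult (mat_mult M M) M = (\<lambda>u v. - c\<^sup>2 * M u v)"
  shows "mat_pow M (2 * k + 1) = (\<lambda>u v. (- c\<^sup>2) ^ k * M u v) \<and>
         mat_pow M (2 * k + 2) = (\<lambda>u v. (- c\<^sup>2) ^ k * mat_mult M M u v)"
proof (induction k)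
  case 0
  show ?case by (simp add: numeral_2_eq_2 mat_pow_Suc_eq mat_pow_0_eq)
next
  case (Suc k)
  have "2 * Suc k + 1 = Suc (2 * k + 2)" by simp
  then have odd: "mat_pow M (2 * Suc k + 1) = (\<lambda>u v. (- c\<^sup>2) ^ Suc k * M u v)"
    using Suc.IH by (simp only: mat_pow_Suc_eq mat_mult_scale_left cube) (simp add: mult_ac)
  have "2 * Suc k + 2 = Suc (2 * Suc k + 1)" by simp
  then have "mat_pow M (2 * Suc k + 2) = (\<lambda>u v. (- c\<^sup>2) ^ Suc k * mat_mult M M u v)"
    by (simp only: mat_pow_Suc_eq odd mat_mult_scale_left)
  with odd show ?case by blast
qed

lemma mat_exp_of_cube:
  assumes cube: "mat_mult (mat_mult M M) M = (\<lambda>u v. - c\<^sup>2 * M u v)" and c: "c \<noteq> 0"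
  shows "mat_exp M u v =
           mat_id u v + sin c / c * M u v + (1 - cos c) / c\<^sup>2 * mat_mult M M u v"
proof -
  define M2 where "M2 = mat_mult M M u v"
  have series_term: "mat_pow M k u v / fact k =
      sin_coeff k * c ^ k * (M u v / c) - cos_coeff k * c ^ k * (M2 / c\<^sup>2)
      + (if k = 0 then mat_id u v + M2 / c\<^sup>2 else 0)" for k
  proof -
    have "k = 0 \<or> (\<exists>j. k = 2 * j + 1) \<or> (\<exists>j. k = 2 * j + 2)" by presburger
    then consider "k = 0" | j where "k = 2 * j + 1" | j where "k = 2 * j + 2" by blast
    then show ?thesis
    proof cases
      case 1
      then show ?thesis by (simp add: mat_pow_0_eq)
    next
      case (2 j)
      have sin: "sin_coeff k = (-1) ^ j / fact k" and cos: "cos_coeff k = 0"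
        using 2 by (simp_all add: sin_coeff_def cos_coeff_def)
      have pow: "c ^ k = (c\<^sup>2) ^ j * c"
        using 2 by (simp add: power_mult[symmetric])
      \<comment> \<open>\<open>power_minus\<close> is instantiated because it loops on \<open>(-1) ^ j\<close>\<close>
      have "mat_pow M k u v = (-1) ^ j * (c\<^sup>2) ^ j * M u v"
        unfolding 2 mat_pow_odd_even_of_cube[OF cube, THEN conjunct1] by (simp add: power_minus[of "c\<^sup>2"])
      moreover have "k \<noteq> 0" using 2 by simp
      ultimately show ?thesis
        using c by (simp add: sin cos pow field_simps)
    next
      case (3 j)
      have sin: "sin_coeff k = 0" and cos: "cos_coeff k = - ((-1) ^ j / fact k)"
        using 3 by (simp_all add: sin_coeff_def cos_coeff_def)
      have pow: "c ^ k = (c\<^sup>2) ^ j * c\<^sup>2"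
        unfolding 3 power_add power_mult by (rule refl)
      have "mat_pow M k u v = (-1) ^ j * (c\<^sup>2) ^ j * M2"
        unfolding 3 mat_pow_odd_even_of_cube[OF cube, THEN conjunct2] by (simp add: M2_def power_minus[of "c\<^sup>2"])
      moreover have "k \<noteq> 0" using 3 by simp
      ultimately show ?thesis
        using c by (simp add: sin cos pow field_simps)
    qed
  qed
  have "(\<lambda>k. mat_pow M k u v / fact k) sums
          (sin c * (M u v / c) - cos c * (M2 / c\<^sup>2) + (mat_id u v + M2 / c\<^sup>2))"
    unfolding series_term
    using sin_converges[of c] cos_converges[of c] sums_single[of 0 "\<lambda>_. mat_id u v + M2 / c\<^sup>2"]
    by (intro sums_add sums_diff sums_mult2) simp_all
  then have "mat_exp M u v =
      sin c * (M u v / c) - cos c * (M2 / c\<^sup>2) + (mat_id u v + M2 / c\<^sup>2)"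
    unfolding mat_exp_def by (rule sums_unique[symmetric])
  also have "\<dots> = mat_id u v + sin c / c * M u v + (1 - cos c) / c\<^sup>2 * mat_mult M M u v"
    by (simp add: M2_def diff_divide_distrib algebra_simps)
  finally show ?thesis .
qed

lemma mat_exp_quarter_turn:
  assumes cube: "mat_mult (mat_mult A A) A = (\<lambda>u v. - l\<^sup>2 * A u v)" and l: "l \<noteq> 0"
  shows "mat_exp (\<lambda>u v. pi / 2 / l * A u v) u v
           = mat_id u v + A u v / l + mat_mult A A u v / l\<^sup>2"
proof -
  define t where "t = pi / 2 / l"
  have t: "t * l = pi / 2"
    using l by (simp add: t_def)
  have square: "mat_mult (\<lambda>u v. t * A u v) (\<lambda>u v. t * A u v) = (\<lambda>u v. t\<^sup>2 * mat_mult A A u v)"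
    by (simp add: mat_mult_scale_left mat_mult_scale_right power2_eq_square mult.assoc)
  have cube_t: "mat_mult (mat_mult (\<lambda>u v. t * A u v) (\<lambda>u v. t * A u v)) (\<lambda>u v. t * A u v)
      = (\<lambda>u v. - (pi / 2)\<^sup>2 * (t * A u v))"
    by (simp add: mat_mult_scale_left mat_mult_scale_right cube flip: t)
      (simp add: power2_eq_square mult_ac)
  have coefficients: "w + 1 / h * (h / l * x) + 1 / h\<^sup>2 * ((h / l)\<^sup>2 * y) = w + x / l + y / l\<^sup>2"
    if "h \<noteq> 0" for h w x y :: real
    using that by (simp add: power_divide)
  have "mat_exp (\<lambda>u v. t * A u v) u v = mat_id u v + sin (pi / 2) / (pi / 2) * (t * A u v)
      + (1 - cos (pi / 2)) / (pi / 2)\<^sup>2 * mat_mult (\<lambda>u v. t * A u v) (\<lambda>u v. t * A u v) u v"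
    by (rule mat_exp_of_cube[OF cube_t]) simp
  also have "\<dots> = mat_id u v + A u v / l + mat_mult A A u v / l\<^sup>2"
    unfolding square unfolding sin_pi_half cos_pi_half diff_zero t_def
    by (rule coefficients) simp
  finally show ?thesis
    by (simp only: t_def)
qed

lemma sum_UNIV_prod: "(\<Sum>x\<in>UNIV. f x) = (\<Sum>a\<in>UNIV. \<Sum>b\<in>UNIV. f (a, b))"
  by (simp add: sum.cartesian_product' flip: UNIV_Times_UNIV)

lemma sum_UNIV_add_right:
  "(\<Sum>b\<in>UNIV. h (b + k)) = (\<Sum>b\<in>(UNIV :: 'a::{ab_group_add,finite} set). h b)"
  by (rule sum.reindex_bij_witness[of _ "\<lambda>b. b - k" "\<lambda>b. b + k"]) auto

lemma sum_UNIV_mult_left: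
  fixes c :: "'a::{field,finite}"
  assumes "c \<noteq> 0"
  shows "(\<Sum>b\<in>UNIV. h (c * b)) = (\<Sum>b\<in>UNIV. h b)"
  by (rule sum.reindex_bij_witness[of _ "\<lambda>b. b / c" "\<lambda>b. c * b"]) (use assms in auto)

section \<open>Ring endomorphisms of finite fields\<close>

definition ring_endo :: "('a::comm_ring_1 \<Rightarrow> 'a) \<Rightarrow> bool" where
  "ring_endo \<sigma> \<longleftrightarrow>
     (\<forall>x y. \<sigma> (x + y) = \<sigma> x + \<sigma> y) \<and> (\<forall>x y. \<sigma> (x * y) = \<sigma> x * \<sigma> y) \<and> \<sigma> 1 = 1"

lemma ring_endo_id: "ring_endo id"
  by (simp add: ring_endo_def)

lemma ring_endo_0: "ring_endo \<sigma> \<Longrightarrow> \<sigma> 0 = 0"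
  unfolding ring_endo_def by (metis add_0 add_cancel_right_right)

lemma ring_endo_power: "ring_endo \<sigma> \<Longrightarrow> \<sigma> (x ^ i) = \<sigma> x ^ i"
  by (induction i) (simp_all add: ring_endo_def)

lemma ring_endo_sum: "ring_endo \<sigma> \<Longrightarrow> \<sigma> (\<Sum>i\<in>A. f i) = (\<Sum>i\<in>A. \<sigma> (f i))"
  by (induction A rule: infinite_finite_induct) (simp_all add: ring_endo_0 ring_endo_def)

lemma ring_endo_funpow: "ring_endo \<sigma> \<Longrightarrow> ring_endo (\<sigma> ^^ i)"
  by (induction i) (simp_all add: ring_endo_def)

lemma ring_endo_square:
  assumes "(1::'a::comm_ring_1) + 1 = 0"
  shows "ring_endo (\<lambda>x::'a. x * x)"
proof -
  have "(x + y) * (x + y) = x * x + y * y + (1 + 1) * (x * y)" for x y :: 'a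
    by (simp add: algebra_simps)
  with assms show ?thesis by (simp add: ring_endo_def mult_ac)
qed

lemma ring_endo_poly:
  assumes "ring_endo \<sigma>" and "\<And>i. \<sigma> (coeff p i) = coeff p i"
  shows "\<sigma> (poly p x) = poly p (\<sigma> x)"
  using assms ring_endo_power[OF assms(1)]
  by (simp add: poly_altdef ring_endo_sum ring_endo_def)

lemma finite_field_has_generator:
  "\<exists>g::'a::{field,finite}. \<forall>x. x \<noteq> 0 \<longrightarrow> (\<exists>i::nat. x = g ^ i)"
proof -
  let ?R = "ring_of_type_algebra :: 'a ring"
  interpret field ?R by rule
  have pow: "x [^]\<^bsub>?R\<^esub> i = x ^ i" for x :: 'a and i :: nat
    by (induct i) (simp_all add: ring_of_type_algebra_def mult.commute)
  have "finite (carrier ?R)" by simp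
  from finite_field_mult_group_has_gen[OF this]
  \<comment> \<open>qualified: \<open>Ring_Divisibility\<close> defines a different \<open>mult_of\<close>\<close>
  obtain g where "carrier (Multiplicative_Group.mult_of ?R) = {g [^]\<^bsub>?R\<^esub> i | i::nat. i \<in> UNIV}"
    by (elim bexE)
  moreover have "carrier (Multiplicative_Group.mult_of ?R) = UNIV - {0}"
    by (simp add: ring_of_type_algebra_def)
  ultimately have "x \<noteq> 0 \<Longrightarrow> \<exists>i::nat. x = g ^ i" for x
    by (simp add: pow set_eq_iff)
  then show ?thesis by blast
qed

lemma ring_endo_eq_on_generator:
  fixes g :: "'a::field"
  assumes gen: "\<forall>x. x \<noteq> 0 \<longrightarrow> (\<exists>i::nat. x = g ^ i)"
    and "ring_endo \<sigma>" and "ring_endo \<tau>" and "\<sigma> g = \<tau> g"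
  shows "\<sigma> = \<tau>"
proof
  fix x
  show "\<sigma> x = \<tau> x"
    using gen assms(2-4) by (cases "x = 0") (auto simp: ring_endo_0 ring_endo_power)
qed

lemma char_two_add_self:
  assumes "(1::'a::ring_1) + 1 = 0"
  shows "x + x = (0::'a)"
  by (metis assms distrib_left mult_1_right mult_zero_right)

text \<open>Pigeonhole: two of the \<open>2 ^ (n + 1)\<close> subset sums of \<open>1, g, \<dots>, g\<^sup>n\<close> coincide, and in
  characteristic 2 their sum is a nonzero \<open>{0,1}\<close>-polynomial vanishing at \<open>g\<close>.\<close>

lemma exists_binary_poly_root:
  fixes g :: "'a::{field,finite}"
  assumes card: "card (UNIV :: 'a set) = 2 ^ n" and char: "(1::'a) + 1 = 0"
  shows "\<exists>p. p \<noteq> 0 \<and> degree p \<le> n \<and> (\<forall>i. coeff p i \<in> {0, 1}) \<and> poly p g = 0"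
proof -
  define ind :: "nat set \<Rightarrow> 'a poly" where "ind A = (\<Sum>i\<in>A. monom 1 i)" for A
  have coeff_ind: "finite A \<Longrightarrow> coeff (ind A) i = (if i \<in> A then 1 else 0)" for A i
    by (simp add: ind_def coeff_sum coeff_monom)
  have "\<not> inj_on (\<lambda>A. poly (ind A) g) (Pow {..n})"
  proof
    assume "inj_on (\<lambda>A. poly (ind A) g) (Pow {..n})"
    then have "card ((\<lambda>A. poly (ind A) g) ` Pow {..n}) = 2 ^ Suc n"
      by (simp add: card_image card_Pow)
    moreover have "card ((\<lambda>A. poly (ind A) g) ` Pow {..n}) \<le> card (UNIV :: 'a set)"
      by (rule card_mono) simp_all
    ultimately show False using card by simp
  qed
  then obtain A B where AB: "A \<subseteq> {..n}" "B \<subseteq> {..n}" "A \<noteq> B" "poly (ind A) g = poly (ind B) g"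
    unfolding inj_on_def by blast
  then have fin: "finite A" "finite B" by (auto intro: finite_subset)
  define p where "p = ind A + ind B"
  have coeff_p: "coeff p i = (if i \<in> A then 1 else 0) + (if i \<in> B then 1 else 0)" for i
    by (simp add: p_def coeff_ind fin)
  obtain i where "i \<in> A \<longleftrightarrow> i \<notin> B" using AB(3) by blast
  then have "p \<noteq> 0" using coeff_p[of i] by auto
  moreover have "degree p \<le> n"
    using AB(1,2) by (intro degree_le) (auto simp: coeff_p)
  moreover have "coeff p i \<in> {0, 1}" for i
    using char by (simp add: coeff_p)
  moreover have "poly p g = 0"
    using AB(4) char_two_add_self[OF char] by (simp add: p_def)
  ultimately show ?thesis by blast
qed

section \<open>The groups \<open>A(n, \<theta>)\<close>\<close>

definition arc_sign :: "('a::field \<Rightarrow> 'a) \<Rightarrow> ('a \<times> 'a) set \<Rightarrow> 'a \<times> 'a \<Rightarrow> real" where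
  "arc_sign \<theta> C g = (if g \<in> C then 1 else if Ainv \<theta> g \<in> C then -1 else 0)"

definition same_fst :: "'a \<times> 'b \<Rightarrow> 'a \<times> 'b \<Rightarrow> real" where
  "same_fst u v = (if fst u = fst v then 1 else 0)"

locale additive_twist =
  fixes \<theta> :: "'a::field \<Rightarrow> 'a"
  assumes aut_add: "\<And>x y. \<theta> (x + y) = \<theta> x + \<theta> y"
begin

lemma aut_0 [simp]: "\<theta> 0 = 0"
  using aut_add[of 0 0] by (metis add_0 add_cancel_right_right)

lemma aut_uminus: "\<theta> (- x) = - \<theta> x"
  by (metis aut_0 aut_add add.right_inverse minus_unique)

lemma Amul_assoc: "Amul \<theta> (Amul \<theta> x y) z = Amul \<theta> x (Amul \<theta> y z)"
  by (simp add: Amul_def aut_add algebra_simps)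

lemma Amul_Aone_left [simp]: "Amul \<theta> Aone x = x"
  by (simp add: Amul_def Aone_def)

lemma Amul_Aone_right [simp]: "Amul \<theta> x Aone = x"
  by (simp add: Amul_def Aone_def)

lemma Amul_Ainv_left [simp]: "Amul \<theta> (Ainv \<theta> x) x = Aone"
  by (simp add: Amul_def Ainv_def Aone_def algebra_simps)

lemma Amul_Ainv_right [simp]: "Amul \<theta> x (Ainv \<theta> x) = Aone"
  by (simp add: Amul_def Ainv_def Aone_def aut_uminus algebra_simps)

lemma Ainv_Ainv [simp]: "Ainv \<theta> (Ainv \<theta> x) = x"
  by (simp add: Ainv_def aut_uminus)

lemma Ainv_Amul: "Ainv \<theta> (Amul \<theta> x y) = Amul \<theta> (Ainv \<theta> y) (Ainv \<theta> x)"
  by (simp add: Amul_def Ainv_def aut_add aut_uminus algebra_simps)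

lemma Amul_Ainv_eq_Aone_iff: "Amul \<theta> v (Ainv \<theta> u) = Aone \<longleftrightarrow> u = v"
proof
  assume "Amul \<theta> v (Ainv \<theta> u) = Aone"
  then have "Amul \<theta> (Amul \<theta> v (Ainv \<theta> u)) u = u" by simp
  then show "u = v" by (simp add: Amul_assoc)
qed simp

lemma self_in_Aconjcl: "g \<in> Aconjcl \<theta> g"
proof -
  have "Ainv \<theta> Aone = Aone"
    by (simp add: Ainv_def Aone_def)
  then have "g = Amul \<theta> (Amul \<theta> Aone g) (Ainv \<theta> Aone)"
    by simp
  then show ?thesis
    unfolding Aconjcl_def by blast
qed

lemma skew_adj_Amul: "skew_adj (Amul \<theta>) C u v = arc_sign \<theta> C (Amul \<theta> v (Ainv \<theta> u))"
proof -
  have arc: "(\<exists>c\<in>C. y = Amul \<theta> c x) \<longleftrightarrow> Amul \<theta> y (Ainv \<theta> x) \<in> C" for x y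
  proof
    assume "\<exists>c\<in>C. y = Amul \<theta> c x"
    then obtain c where "c \<in> C" and "y = Amul \<theta> c x" by blast
    then show "Amul \<theta> y (Ainv \<theta> x) \<in> C" by (simp add: Amul_assoc)
  next
    assume "Amul \<theta> y (Ainv \<theta> x) \<in> C"
    moreover have "y = Amul \<theta> (Amul \<theta> y (Ainv \<theta> x)) x" by (simp add: Amul_assoc)
    ultimately show "\<exists>c\<in>C. y = Amul \<theta> c x" by blast
  qed
  have "Amul \<theta> u (Ainv \<theta> v) = Ainv \<theta> (Amul \<theta> v (Ainv \<theta> u))"
    by (simp add: Ainv_Amul)
  then show ?thesis
    unfolding skew_adj_def arc_sign_def arc by (simp only:)
qed

end

section \<open>Fields of order \<open>2\<^sup>n\<close> with a generating automorphism\<close>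

locale galois_generator = additive_twist \<theta> for \<theta> :: "'a::{field,finite} \<Rightarrow> 'a" +
  fixes n :: nat
  assumes card_UNIV: "card (UNIV :: 'a set) = 2 ^ n"
    and char_two: "(1::'a) + 1 = 0"
    and bij_aut: "bij \<theta>"
    and aut_mult: "\<And>x y. \<theta> (x * y) = \<theta> x * \<theta> y"
    and aut_funpow_n: "\<theta> ^^ n = id"
    and aut_funpow_neq_id: "\<And>k. 0 < k \<Longrightarrow> k < n \<Longrightarrow> \<theta> ^^ k \<noteq> id"
begin

lemma two_eq_0 [simp]: "(2::'a) = 0"
  by (metis char_two one_add_one)

lemma add_self [simp]: "x + x = (0::'a)"
  by (rule char_two_add_self[OF char_two])

lemma add_self_left [simp]: "x + (x + y) = (y::'a)"
  by (simp add: add.assoc[symmetric])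

lemma add_self_right [simp]: "x + y + y = (x::'a)"
  by (simp add: add.assoc)

lemma add_eq_0_iff_eq: "x + y = (0::'a) \<longleftrightarrow> x = y"
  by (metis add_self add_self_left add.right_neutral)

lemma uminus_eq_self [simp]: "- x = (x::'a)"
  by (metis add_self minus_unique)

lemma diff_eq_add [simp]: "x - y = x + (y::'a)"
  by (simp add: diff_conv_add_uminus)

lemma inj_aut: "inj \<theta>"
  using bij_aut bij_is_inj by blast

lemma aut_eq_0_iff [simp]: "\<theta> x = 0 \<longleftrightarrow> x = 0"
  using inj_aut aut_0 by (metis injD)

lemma aut_1 [simp]: "\<theta> 1 = 1"
  using aut_mult[of 1 1] by (metis aut_eq_0_iff mult_cancel_left1 one_neq_zero)

lemma ring_endo_aut: "ring_endo \<theta>"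
  by (simp add: ring_endo_def aut_add aut_mult)

lemma aut_inverse: "\<theta> (inverse x) = inverse (\<theta> x)"
proof (cases "x = 0")
  case False
  then have "\<theta> x * \<theta> (inverse x) = 1" by (simp flip: aut_mult)
  then show ?thesis by (metis inverse_unique)
qed simp

lemma funpow_aut_inj_on_generator:
  assumes gen: "\<forall>x. x \<noteq> 0 \<longrightarrow> (\<exists>i::nat. x = g ^ i)"
  shows "inj_on (\<lambda>i. (\<theta> ^^ i) g) {..<n}"
proof -
  have "(\<theta> ^^ i) g \<noteq> (\<theta> ^^ k) g" if ik: "i < k" "k < n" for i k
  proof
    assume "(\<theta> ^^ i) g = (\<theta> ^^ k) g"
    also have "\<dots> = (\<theta> ^^ i) ((\<theta> ^^ (k - i)) g)"
      using ik by (metis funpow_add le_add_diff_inverse less_imp_le o_apply)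
    finally have "(\<theta> ^^ (k - i)) g = id g"
      using inj_fn[OF inj_aut, of i] by (simp add: inj_eq)
    then have "\<theta> ^^ (k - i) = id"
      by (intro ring_endo_eq_on_generator[OF gen] ring_endo_funpow ring_endo_aut ring_endo_id)
    moreover have "0 < k - i" "k - i < n" using ik by simp_all
    ultimately show False using aut_funpow_neq_id by blast
  qed
  then show ?thesis
    unfolding inj_on_def by (metis lessThan_iff linorder_neqE_nat)
qed

lemma square_eq_funpow_aut: "\<exists>k. \<forall>x. (\<theta> ^^ k) x = x * x"
proof -
  obtain g :: 'a where gen: "\<forall>x. x \<noteq> 0 \<longrightarrow> (\<exists>i::nat. x = g ^ i)"
    using finite_field_has_generator by blast
  obtain p where p: "p \<noteq> 0" "degree p \<le> n" "\<forall>i. coeff p i \<in> {0, 1}" "poly p g = 0"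
    using exists_binary_poly_root[OF card_UNIV char_two] by blast
  have root: "poly p (\<sigma> g) = 0" if \<sigma>: "ring_endo \<sigma>" for \<sigma>
  proof -
    have "\<sigma> (coeff p i) = coeff p i" for i
    proof -
      have "coeff p i \<in> {0, 1}" using p(3) by blast
      then show ?thesis using ring_endo_0[OF \<sigma>] \<sigma> unfolding ring_endo_def by auto
    qed
    then show ?thesis
      using ring_endo_poly[OF \<sigma>] p(4) ring_endo_0[OF \<sigma>] by metis
  qed
  let ?orbit = "(\<lambda>i. (\<theta> ^^ i) g) ` {..<n}"
  have "g * g \<in> ?orbit"
  proof (rule ccontr)
    assume "g * g \<notin> ?orbit"
    then have "card (insert (g * g) ?orbit) = n + 1"
      using card_image[OF funpow_aut_inj_on_generator[OF gen]] by simp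
    moreover have "insert (g * g) ?orbit \<subseteq> {x. poly p x = 0}"
      using root[OF ring_endo_square[OF char_two]] root[OF ring_endo_funpow[OF ring_endo_aut]]
      by auto
    then have "card (insert (g * g) ?orbit) \<le> card {x. poly p x = 0}"
      by (intro card_mono) simp_all
    moreover have "card {x. poly p x = 0} \<le> n"
      using card_poly_roots_bound[OF p(1)] p(2) by simp
    ultimately show False by simp
  qed
  then obtain k where "(\<theta> ^^ k) g = g * g" by (metis (no_types, lifting) imageE)
  then have "\<theta> ^^ k = (\<lambda>x. x * x)"
    by (intro ring_endo_eq_on_generator[OF gen] ring_endo_funpow ring_endo_aut
        ring_endo_square char_two)
  then show ?thesis by metis
qed

lemma aut_fixed_iff: "\<theta> x = x \<longleftrightarrow> x = 0 \<or> x = 1"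
proof
  assume fixed: "\<theta> x = x"
  obtain k where "\<forall>y. (\<theta> ^^ k) y = y * y" using square_eq_funpow_aut by blast
  moreover have "(\<theta> ^^ k) x = x" using fixed by (induction k) simp_all
  ultimately have "x * x = x" by metis
  then show "x = 0 \<or> x = 1" by (metis mult_cancel_left1 mult_zero_left)
qed auto

definition N :: "'a \<Rightarrow> 'a" where
  "N a = a * \<theta> a"

lemma N_eq_0_iff [simp]: "N a = 0 \<longleftrightarrow> a = 0"
  by (simp add: N_def)

lemma Amul_Pair [simp]: "Amul \<theta> (a, b) (c, d) = (a + c, b + d + a * \<theta> c)"
  by (simp add: Amul_def)

lemma Ainv_Pair [simp]: "Ainv \<theta> (a, b) = (a, N a + b)"
  by (simp add: Ainv_def N_def)

lemma Apow_Pair_2: "Apow \<theta> (a, b) 2 = (0, N a)"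
  by (simp add: numeral_2_eq_2 N_def Aone_def)

lemma Apow_Pair_3: "Apow \<theta> (a, b) 3 = (a, N a + b)"
  by (simp add: numeral_3_eq_3 N_def Aone_def algebra_simps)

lemma Apow_Pair_4: "Apow \<theta> (a, b) 4 = Aone"
  by (simp add: numeral_eq_Suc N_def Aone_def algebra_simps)

lemma Aord_eq_4_iff: "Aord \<theta> g = 4 \<longleftrightarrow> fst g \<noteq> 0"
proof (cases g)
  case (Pair a b)
  show ?thesis
  proof (cases "a = 0")
    case True
    then have "Apow \<theta> g 2 = Aone" using Pair by (simp add: Apow_Pair_2 Aone_def)
    then have "Aord \<theta> g \<le> 2" unfolding Aord_def by (intro Least_le) simp
    then show ?thesis using Pair True by simp
  next
    case False
    have ne: "Apow \<theta> g k \<noteq> Aone" if "k \<in> {1, 2, 3}" for k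
      using that Pair False by (auto simp: Apow_Pair_2 Apow_Pair_3 Aone_def)
    have "Aord \<theta> g = 4"
      unfolding Aord_def
    proof (rule Least_equality)
      show "0 < (4::nat) \<and> Apow \<theta> g 4 = Aone" using Pair by (simp add: Apow_Pair_4)
    next
      fix k assume "0 < k \<and> Apow \<theta> g k = Aone"
      with ne show "4 \<le> k" by (cases "k \<in> {1, 2, 3}") auto
    qed
    then show ?thesis using Pair False by simp
  qed
qed

end

section \<open>Odd degree: the hyperplane \<open>T\<close> and its character\<close>

locale odd_galois_generator = galois_generator +
  fixes m :: nat
  assumes n_odd: "n = 2 * m + 1"
begin

definition L :: "'a \<Rightarrow> 'a" where
  "L s = \<theta> s + s"

definition T :: "'a set" where
  "T = range L"

definition trace :: "'a \<Rightarrow> 'a" where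
  "trace x = (\<Sum>i<n. (\<theta> ^^ i) x)"

definition chi :: "'a \<Rightarrow> real" where
  "chi y = (if y \<in> T then 1 else -1)"

lemma L_add: "L (s + t) = L s + L t"
  by (simp add: L_def aut_add algebra_simps)

lemma L_eq_iff: "L s = L t \<longleftrightarrow> t = s \<or> t = s + 1"
proof -
  have "L s = L t \<longleftrightarrow> \<theta> (s + t) + (s + t) = 0"
    using add_eq_0_iff_eq[of "L s" "L t"] by (simp add: L_def aut_add add_ac)
  also have "\<dots> \<longleftrightarrow> \<theta> (s + t) = s + t"
    by (rule add_eq_0_iff_eq)
  also have "\<dots> \<longleftrightarrow> s + t = 0 \<or> s + t = 1"
    by (rule aut_fixed_iff)
  also have "\<dots> \<longleftrightarrow> t = s \<or> t = s + 1"
    by (auto simp: add_eq_0_iff_eq dest: arg_cong[where f = "(+) s"])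
  finally show ?thesis .
qed

lemma zero_in_T: "0 \<in> T"
  unfolding T_def using rangeI[of L 0] by (simp add: L_def)

lemma T_add:
  assumes "x \<in> T" and "y \<in> T"
  shows "x + y \<in> T"
proof -
  obtain s t where "x = L s" and "y = L t" using assms unfolding T_def by blast
  then have "x + y = L (s + t)" by (simp add: L_add)
  then show ?thesis unfolding T_def by blast
qed

lemma card_UNIV_eq_double_card_T: "card (UNIV :: 'a set) = 2 * card T"
proof -
  have "card (UNIV :: 'a set) = (\<Sum>y\<in>T. card {s. L s = y})"
    using sum.image_gen[of "UNIV :: 'a set" "\<lambda>_. 1::nat" L] by (simp add: T_def)
  also have "\<dots> = (\<Sum>y\<in>T. 2)"
  proof (rule sum.cong[OF refl])
    fix y assume "y \<in> T"
    then obtain t where "y = L t" unfolding T_def by blast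
    then have "{s. L s = y} = {t, t + 1}" using L_eq_iff by auto
    then show "card {s. L s = y} = 2" by simp
  qed
  finally show ?thesis by simp
qed

lemma trace_L: "trace (L s) = 0"
proof -
  have "(\<Sum>i<Suc n. (\<theta> ^^ i) s) = s + (\<Sum>i<n. (\<theta> ^^ i) (\<theta> s))"
    by (subst sum.lessThan_Suc_shift) (simp add: funpow_swap1)
  moreover have "(\<Sum>i<Suc n. (\<theta> ^^ i) s) = (\<Sum>i<n. (\<theta> ^^ i) s) + s"
    using aut_funpow_n by simp
  ultimately have "(\<Sum>i<n. (\<theta> ^^ i) (\<theta> s)) = (\<Sum>i<n. (\<theta> ^^ i) s)"
    by (simp add: add.commute)
  moreover have "(\<theta> ^^ i) (x + y) = (\<theta> ^^ i) x + (\<theta> ^^ i) y" for i x y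
    using ring_endo_funpow[OF ring_endo_aut, of i] by (simp add: ring_endo_def)
  ultimately show ?thesis
    by (simp add: trace_def L_def sum.distrib)
qed

lemma trace_1: "trace 1 = 1"
proof -
  have "(\<theta> ^^ i) 1 = 1" for i
    by (induction i) simp_all
  then have "trace 1 = of_nat n"
    by (simp add: trace_def)
  also have "(of_nat n :: 'a) = 1"
    by (simp add: n_odd)
  finally show ?thesis .
qed

lemma one_notin_T: "1 \<notin> T"
proof
  assume "1 \<in> T"
  then obtain s where "L s = 1" unfolding T_def by (metis rangeE)
  then have "trace 1 = 0" using trace_L[of s] by simp
  then show False by (simp add: trace_1)
qed

lemma plus_one_in_T: "y \<notin> T \<Longrightarrow> y + 1 \<in> T"
proof (rule ccontr)
  assume y: "y \<notin> T" "y + 1 \<notin> T"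
  have disj: "T \<inter> (\<lambda>t. t + 1) ` T = {}"
    using T_add one_notin_T by (auto, metis add_self_left)
  have "inj_on (\<lambda>t. t + 1) T" by (rule inj_onI) simp
  then have "card (T \<union> (\<lambda>t. t + 1) ` T) = card (UNIV :: 'a set)"
    using disj card_UNIV_eq_double_card_T by (simp add: card_Un_disjoint card_image)
  then have "T \<union> (\<lambda>t. t + 1) ` T = UNIV"
    by (metis card_eq_UNIV_imp_eq_UNIV finite_UNIV)
  then obtain t where "t \<in> T" and "y = t + 1" using y(1) by blast
  with y(2) show False by simp
qed

lemma chi_add: "chi (x + y) = chi x * chi y"
proof -
  have "x + y \<in> T \<longleftrightarrow> (x \<in> T \<longleftrightarrow> y \<in> T)"
  proof (cases "x \<in> T")
    case True
    then show ?thesis using T_add[of x y] T_add[of x "x + y"] by auto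
  next
    case x: False
    show ?thesis
    proof (cases "y \<in> T")
      case True
      then show ?thesis using x T_add[of "x + y" y] by auto
    next
      case y: False
      have "(x + 1) + (y + 1) = x + y" by (simp add: add_ac)
      then show ?thesis using x y T_add[OF plus_one_in_T[OF x] plus_one_in_T[OF y]] by simp
    qed
  qed
  then show ?thesis by (simp add: chi_def)
qed

lemma chi_0 [simp]: "chi 0 = 1"
  by (simp add: chi_def zero_in_T)

lemma chi_1 [simp]: "chi 1 = -1"
  by (simp add: chi_def one_notin_T)

lemma sum_chi: "(\<Sum>y\<in>UNIV. chi y) = 0"
proof -
  have "(\<Sum>y\<in>UNIV. chi y) = (\<Sum>y\<in>UNIV. chi (y + 1))"
    by (rule sum_UNIV_add_right[symmetric])
  then show ?thesis
    by (simp add: chi_add sum_negf)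
qed

lemma sum_chi_mult: "c \<noteq> 0 \<Longrightarrow> (\<Sum>y\<in>UNIV. chi (c * y)) = 0"
  using sum_UNIV_mult_left[of c chi] sum_chi by simp

lemma N_inj:
  assumes a: "a \<noteq> 0" and a': "a' \<noteq> 0" and eq: "N a = N a'"
  shows "a = a'"
proof -
  define r where "r = a / a'"
  have "r * \<theta> r = N a / N a'"
    by (simp add: r_def N_def divide_inverse aut_mult aut_inverse)
  then have "r * \<theta> r = 1"
    using eq a' by simp
  then have "\<theta> r = inverse r"
    using inverse_unique by metis
  then have "\<theta> (\<theta> r) = r"
    by (simp add: aut_inverse)
  then have "((\<theta> ^^ 2) ^^ (m + 1)) r = r"
    by (induction m) (simp_all add: numeral_2_eq_2)
  then have "(\<theta> ^^ (n + 1)) r = r"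
    by (simp add: funpow_mult n_odd)
  then have "\<theta> r = r"
    using aut_funpow_n by (simp add: funpow_Suc_right)
  then have "r = 1"
    using aut_fixed_iff a a' by (simp add: r_def)
  then show ?thesis
    using a' by (simp add: r_def)
qed

lemma conj_Pair:
  "Amul \<theta> (Amul \<theta> (a * s, d) (a, b)) (Ainv \<theta> (a * s, d)) = (a, b + N a * L s)"
  by (simp add: N_def L_def aut_mult algebra_simps)

lemma Aconjcl_Pair:
  assumes a: "a \<noteq> 0"
  shows "Aconjcl \<theta> (a, b) = (\<lambda>t. (a, b + N a * t)) ` T"
proof (intro equalityI subsetI)
  fix z assume "z \<in> Aconjcl \<theta> (a, b)"
  then obtain c d where z: "z = Amul \<theta> (Amul \<theta> (c, d) (a, b)) (Ainv \<theta> (c, d))"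
    unfolding Aconjcl_def by auto
  have "z = Amul \<theta> (Amul \<theta> (a * (c / a), d) (a, b)) (Ainv \<theta> (a * (c / a), d))"
    using z a by simp
  also have "\<dots> = (a, b + N a * L (c / a))"
    by (rule conj_Pair)
  finally have "z = (a, b + N a * L (c / a))" .
  then show "z \<in> (\<lambda>t. (a, b + N a * t)) ` T"
    unfolding T_def by blast
next
  fix z assume "z \<in> (\<lambda>t. (a, b + N a * t)) ` T"
  then obtain s where "z = (a, b + N a * L s)"
    unfolding T_def by blast
  then show "z \<in> Aconjcl \<theta> (a, b)"
    unfolding Aconjcl_def using conj_Pair[of a s 0 b, symmetric] by blast
qed

end

section \<open>The skew adjacency matrix of \<open>Cay(G, C)\<close>\<close>

locale oriented_order4_classes = odd_galois_generator +
  fixes C :: "('a \<times> 'a) set"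
  assumes C_union: "\<forall>g\<in>C. Aord \<theta> g = 4 \<and> Aconjcl \<theta> g \<subseteq> C"
    and C_choice: "\<forall>K\<in>Aclasses4 \<theta>. (K \<subseteq> C) \<longleftrightarrow> \<not> (Ainv \<theta> ` K \<subseteq> C)"
begin

abbreviation sg :: "'a \<times> 'a \<Rightarrow> real" where
  "sg \<equiv> arc_sign \<theta> C"

abbreviation S :: "'a \<times> 'a \<Rightarrow> 'a \<times> 'a \<Rightarrow> real" where
  "S \<equiv> skew_adj (Amul \<theta>) C"

lemma fst_neq_0_if_in_C: "g \<in> C \<Longrightarrow> fst g \<noteq> 0"
  using C_union Aord_eq_4_iff by blast

lemma shift_in_C_iff:
  assumes a: "a \<noteq> 0" and t: "t \<in> T"
  shows "(a, b + N a * t) \<in> C \<longleftrightarrow> (a, b) \<in> C"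
proof -
  have closed: "(a, b' + N a * t) \<in> C" if "(a, b') \<in> C" for b'
  proof -
    have "Aconjcl \<theta> (a, b') \<subseteq> C" using C_union that by blast
    moreover have "(a, b' + N a * t) \<in> Aconjcl \<theta> (a, b')"
      unfolding Aconjcl_Pair[OF a] using t by (rule imageI)
    ultimately show ?thesis by blast
  qed
  show ?thesis
    using closed[of b] closed[of "b + N a * t"] by auto
qed

lemma inverse_in_C_iff:
  assumes a: "a \<noteq> 0"
  shows "(a, N a + b) \<in> C \<longleftrightarrow> (a, b) \<notin> C"
proof -
  let ?K = "Aconjcl \<theta> (a, b)"
  have K: "?K \<in> Aclasses4 \<theta>"
    unfolding Aclasses4_def using Aord_eq_4_iff a by auto
  have inv_K: "Ainv \<theta> ` ?K = Aconjcl \<theta> (a, N a + b)"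
    by (simp add: Aconjcl_Pair[OF a] image_image add.assoc)
  show ?thesis
  proof
    assume "(a, N a + b) \<in> C"
    then have "Ainv \<theta> ` ?K \<subseteq> C"
      using C_union inv_K by simp
    then have "\<not> ?K \<subseteq> C"
      using C_choice K by blast
    then show "(a, b) \<notin> C"
      using C_union by blast
  next
    assume "(a, b) \<notin> C"
    then have "\<not> ?K \<subseteq> C"
      using self_in_Aconjcl by blast
    then have "Ainv \<theta> ` ?K \<subseteq> C"
      using C_choice K by blast
    then show "(a, N a + b) \<in> C"
      using inv_K self_in_Aconjcl by blast
  qed
qed

lemma arc_sign_center [simp]: "sg (0, b) = 0"
  using fst_neq_0_if_in_C by (fastforce simp: arc_sign_def)

lemma arc_sign_Pair: "a \<noteq> 0 \<Longrightarrow> sg (a, b) = (if (a, b) \<in> C then 1 else -1)"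
  using inverse_in_C_iff[of a b] by (simp add: arc_sign_def)

lemma abs_arc_sign: "a \<noteq> 0 \<Longrightarrow> \<bar>sg (a, b)\<bar> = 1"
  by (simp add: arc_sign_Pair)

lemma arc_sign_shift:
  assumes a: "a \<noteq> 0"
  shows "sg (a, b + N a * y) = sg (a, b) * chi y"
proof (cases "y \<in> T")
  case True
  then show ?thesis
    using a by (simp add: arc_sign_Pair shift_in_C_iff chi_def)
next
  case False
  then have "y + 1 \<in> T" by (rule plus_one_in_T)
  moreover have "b + N a * y = N a + (b + N a * (y + 1))"
    by (simp add: distrib_left add_ac)
  then have "sg (a, b + N a * y) = sg (a, N a + (b + N a * (y + 1)))"
    by (simp only:)
  ultimately show ?thesis
    using a False by (simp add: arc_sign_Pair inverse_in_C_iff shift_in_C_iff chi_def)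
qed

lemma arc_sign_scale: "a \<noteq> 0 \<Longrightarrow> sg (a, N a * y) = sg (a, 0) * chi y"
  using arc_sign_shift[of a 0 y] by simp

lemma sum_arc_sign_fiber: "(\<Sum>b\<in>UNIV. sg (a, b)) = 0"
proof (cases "a = 0")
  case False
  then have "(\<Sum>b\<in>UNIV. sg (a, b)) = (\<Sum>y\<in>UNIV. sg (a, N a * y))"
    using sum_UNIV_mult_left[of "N a" "\<lambda>b. sg (a, b)"] by simp
  also have "\<dots> = sg (a, 0) * (\<Sum>y\<in>UNIV. chi y)"
    using False by (simp add: arc_sign_scale sum_distrib_left)
  finally show ?thesis
    by (simp add: sum_chi)
qed simp

lemma sum_arc_sign_fiber_product_neq:
  assumes p: "p \<noteq> 0"
  shows "(\<Sum>b\<in>UNIV. sg (a, b) * sg (p + a, k + b)) = 0"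
proof (cases "a = 0 \<or> p + a = 0")
  case False
  then have a: "a \<noteq> 0" and pa: "p + a \<noteq> 0" by auto
  define r where "r = N a / N (p + a)"
  have "1 + r \<noteq> 0"
    using N_inj[OF a pa] p by (auto simp: r_def add_eq_0_iff_eq)
  have "(\<Sum>b\<in>UNIV. sg (a, b) * sg (p + a, k + b))
      = (\<Sum>y\<in>UNIV. sg (a, N a * y) * sg (p + a, k + N a * y))"
    using a sum_UNIV_mult_left[of "N a" "\<lambda>b. sg (a, b) * sg (p + a, k + b)"] by simp
  also have "\<dots> = (\<Sum>y\<in>UNIV. sg (a, 0) * sg (p + a, k) * chi ((1 + r) * y))"
  proof (rule sum.cong[OF refl])
    fix y
    have "N a * y = N (p + a) * (r * y)"
      using pa by (simp add: r_def)
    then have shift: "sg (p + a, k + N a * y) = sg (p + a, k) * chi (r * y)"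
      by (simp only: arc_sign_shift[OF pa])
    have "chi ((1 + r) * y) = chi y * chi (r * y)"
      by (simp add: chi_add[symmetric] distrib_right)
    then show "sg (a, N a * y) * sg (p + a, k + N a * y) = sg (a, 0) * sg (p + a, k) * chi ((1 + r) * y)"
      by (simp only: shift arc_sign_scale[OF a]) (simp add: mult_ac)
  qed
  also have "\<dots> = sg (a, 0) * sg (p + a, k) * (\<Sum>y\<in>UNIV. chi ((1 + r) * y))"
    by (simp add: sum_distrib_left)
  finally show ?thesis
    using sum_chi_mult[OF \<open>1 + r \<noteq> 0\<close>] by simp
qed auto

lemma sum_arc_sign_fiber_product_eq:
  "(\<Sum>b\<in>UNIV. sg (a, b) * sg (a, q + (N a + b))) =
     (if a = 0 then 0 else - (2 ^ n) * chi (q / N a))"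
proof (cases "a = 0")
  case False
  have "sg (a, b) * sg (a, q + (N a + b)) = - chi (q / N a)" for b
  proof -
    have "q + (N a + b) = b + N a * (q / N a + 1)"
      using False by (simp add: algebra_simps)
    then have "sg (a, q + (N a + b)) = sg (a, b) * chi (q / N a + 1)"
      by (simp only: arc_sign_shift[OF False])
    then show ?thesis
      using False by (simp add: arc_sign_Pair chi_add)
  qed
  then show ?thesis
    using False card_UNIV by simp
qed simp

lemma sum_chi_div_N:
  "(\<Sum>a\<in>UNIV - {0}. chi (q / N a)) = (if q = 0 then 2 ^ n - 1 else -1)"
proof (cases "q = 0")
  case True
  then show ?thesis
    using card_UNIV by (simp add: card_Diff_singleton of_nat_diff)
next
  case False
  have inj: "inj_on (\<lambda>a. q / N a) (UNIV - {0})"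
  proof (rule inj_onI)
    fix x y assume x: "x \<in> UNIV - {0}" and y: "y \<in> UNIV - {0}" and "q / N x = q / N y"
    then have "N x = N y" using False by (simp add: field_simps)
    with x y show "x = y" using N_inj by blast
  qed
  have "(\<lambda>a. q / N a) ` (UNIV - {0}) = UNIV - {0}"
    using False by (intro endo_inj_surj[OF _ _ inj]) auto
  then have "(\<Sum>a\<in>UNIV - {0}. chi (q / N a)) = (\<Sum>z\<in>UNIV - {0}. chi z)"
    using sum.reindex[OF inj, of chi] by simp
  also have "\<dots> = -1"
    by (simp add: sum_diff1 sum_chi)
  finally show ?thesis
    using False by simp
qed

lemma arc_sign_convolution:
  "(\<Sum>x\<in>UNIV. sg x * sg (Amul \<theta> g (Ainv \<theta> x))) =
     (if fst g = 0 then 2 ^ n else 0) - (if g = Aone then (2 ^ n)\<^sup>2 else 0)"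
proof (cases g)
  case (Pair p q)
  have "(\<Sum>x\<in>UNIV. sg x * sg (Amul \<theta> g (Ainv \<theta> x)))
      = (\<Sum>a\<in>UNIV. \<Sum>b\<in>UNIV. sg (a, b) * sg (p + a, (q + N a + p * \<theta> a) + b))"
    by (subst sum_UNIV_prod) (simp add: Pair add_ac)
  also have "\<dots> = (if p = 0 then - (2 ^ n) * (\<Sum>a\<in>UNIV - {0}. chi (q / N a)) else 0)"
  proof (cases "p = 0")
    case True
    then show ?thesis
      using sum_arc_sign_fiber_product_eq
      by (simp add: add.assoc sum.If_cases Diff_eq sum_distrib_left)
  qed (simp add: sum_arc_sign_fiber_product_neq)
  also have "\<dots> = (if fst g = 0 then 2 ^ n else 0) - (if g = Aone then (2 ^ n)\<^sup>2 else 0)"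
    by (simp add: Pair Aone_def sum_chi_div_N power2_eq_square algebra_simps)
  finally show ?thesis .
qed

lemma skew_square: "mat_mult S S = (\<lambda>u v. 2 ^ n * same_fst u v - (2 ^ n)\<^sup>2 * mat_id u v)"
proof (intro ext)
  fix u v
  let ?g = "Amul \<theta> v (Ainv \<theta> u)"
  have "mat_mult S S u v = (\<Sum>x\<in>UNIV. S u (Amul \<theta> x u) * S (Amul \<theta> x u) v)"
    unfolding mat_mult_def
    by (rule sum.reindex_bij_witness[of _ "\<lambda>x. Amul \<theta> x u" "\<lambda>w. Amul \<theta> w (Ainv \<theta> u)"])
      (simp_all add: Amul_assoc)
  also have "\<dots> = (\<Sum>x\<in>UNIV. sg x * sg (Amul \<theta> ?g (Ainv \<theta> x)))"
    by (simp add: skew_adj_Amul Amul_assoc Ainv_Amul)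
  also have "\<dots> = 2 ^ n * same_fst u v - (2 ^ n)\<^sup>2 * mat_id u v"
  proof -
    have "fst ?g = 0 \<longleftrightarrow> fst u = fst v"
      by (cases u, cases v) (auto simp: add_eq_0_iff_eq)
    then show ?thesis
      by (simp add: arc_sign_convolution Amul_Ainv_eq_Aone_iff same_fst_def mat_id_def)
  qed
  finally show "mat_mult S S u v = \<dots>" .
qed

lemma same_fst_mult_skew: "mat_mult same_fst S = (\<lambda>u v. 0)"
proof (intro ext)
  fix u v :: "'a \<times> 'a"
  obtain c d where v: "v = (c, d)" by fastforce
  have "mat_mult same_fst S u v = (\<Sum>a\<in>UNIV. \<Sum>b\<in>UNIV. same_fst u (a, b) * S (a, b) v)"
    unfolding mat_mult_def by (rule sum_UNIV_prod)
  also have "\<dots> = (\<Sum>a\<in>UNIV. if a = fst u then (\<Sum>b\<in>UNIV. S (a, b) v) else 0)"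
    by (intro sum.cong) (auto simp: same_fst_def)
  also have "\<dots> = (\<Sum>b\<in>UNIV. S (fst u, b) v)"
    by simp
  also have "\<dots> = (\<Sum>b\<in>UNIV. sg (c + fst u, b + (d + N (fst u) + c * \<theta> (fst u))))"
    by (simp add: skew_adj_Amul v add_ac)
  also have "\<dots> = 0"
    using sum_UNIV_add_right[of "\<lambda>b. sg (c + fst u, b)"] by (simp add: sum_arc_sign_fiber)
  finally show "mat_mult same_fst S u v = 0" .
qed

lemma skew_cube: "mat_mult (mat_mult S S) S = (\<lambda>u v. - (2 ^ n)\<^sup>2 * S u v)"
  by (simp add: skew_square mat_mult_diff_left mat_mult_scale_left same_fst_mult_skew)

lemma mat_exp_skew:
  "mat_exp (\<lambda>u v. (pi / 2 ^ (n + 1)) * S u v) u v = (S u v + same_fst u v) / 2 ^ n"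
proof -
  have "pi / 2 ^ (n + 1) = pi / 2 / 2 ^ n" by simp
  then have "mat_exp (\<lambda>u v. (pi / 2 ^ (n + 1)) * S u v) u v
      = mat_id u v + S u v / 2 ^ n + mat_mult S S u v / (2 ^ n)\<^sup>2"
    using mat_exp_quarter_turn[OF skew_cube] by simp
  also have "\<dots> = (S u v + same_fst u v) / 2 ^ n"
    by (simp add: skew_square power2_eq_square diff_divide_distrib add_divide_distrib)
  finally show ?thesis .
qed

lemma abs_skew_add_same_fst: "\<bar>S u v + same_fst u v\<bar> = 1"
proof (cases u, cases v)
  fix a b c d assume uv: "u = (a, b)" "v = (c, d)"
  show ?thesis
  proof (cases "a = c")
    case True
    then show ?thesis using uv by (simp add: skew_adj_Amul same_fst_def)
  next
    case False
    then have "c + a \<noteq> 0" by (simp add: add_eq_0_iff_eq)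
    then show ?thesis using False uv by (simp add: skew_adj_Amul same_fst_def abs_arc_sign)
  qed
qed

end

theorem mainTheorem1:
  fixes \<theta> :: "'a::{field,finite} \<Rightarrow> 'a"
    and n m :: nat
    and C :: "('a \<times> 'a) set"
  assumes n_def: "n = 2 * m + 1" and n_ge: "n \<ge> 3"
    and card_F: "card (UNIV :: 'a set) = 2 ^ n"
    and char2: "(1::'a) + 1 = 0"
    and aut_bij: "bij \<theta>"
    and aut_add: "\<And>x y. \<theta> (x + y) = \<theta> x + \<theta> y"
    and aut_mult: "\<And>x y. \<theta> (x * y) = \<theta> x * \<theta> y"
    and gen_n: "\<theta> ^^ n = id"
    and gen_min: "\<And>k. 0 < k \<Longrightarrow> k < n \<Longrightarrow> \<theta> ^^ k \<noteq> id"
    and C_union: "\<forall>g\<in>C. Aord \<theta> g = 4 \<and> Aconjcl \<theta> g \<subseteq> C"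
    and C_choice: "\<forall>K\<in>Aclasses4 \<theta>. (K \<subseteq> C) \<longleftrightarrow> \<not> (Ainv \<theta> ` K \<subseteq> C)"
  shows "uniform_mixing
           (mat_exp (\<lambda>u v. (pi / 2 ^ (n + 1)) * skew_adj (Amul \<theta>) C u v))"
proof -
  interpret oriented_order4_classes \<theta> n m C
    using n_def card_F char2 aut_bij aut_add aut_mult gen_n gen_min C_union C_choice
    by unfold_locales auto
  have "\<bar>mat_exp (\<lambda>u v. (pi / 2 ^ (n + 1)) * S u v) u v\<bar> = 1 / 2 ^ n" for u v
    by (simp only: mat_exp_skew abs_divide abs_skew_add_same_fst) simp
  then show ?thesis
    unfolding uniform_mixing_def by blast
qed

end
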